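(* For every graph $G$ and every positive integer $n \ge 2$, \[ \chi_n(G)\le\begin{cases}\left\lceil \dfrac{\tau(G)-n}{\lceil (2n+2)/3\rceil}\right\rceil+1 & \text{if } 2\le n\le \tau(G),\\ 1 & \text{if } n>\tau(G).\end{cases} \]
   Context: All graphs are finite and simple. The order of a path is its number of vertices, and $\tau(G)$ is the order of a longest path in $G$. For a positive integer $n$, an $n$-detour colouring of $G$ is a colouring of the vertices of $G$ such that no path of order greater than $n$ in $G$ has all its vertices of the same colour (equivalently, each colour class induces a subgraph with no path of order greater than $n$). The $n$th detour chromatic number $\chi_n(G)$ is the minimum number of colours in an $n$-detour colouring of $G$. *)

theory Defs
  imports Complex_Main
begin

definition simple_graph :: "'a set \<Rightarrow> ('a \<Rightarrow> 'a \<Rightarrow> bool) \<Rightarrow> bool" where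
  "simple_graph V E \<longleftrightarrow> finite V \<and> (\<forall>u v. E u v \<longrightarrow> u \<in> V \<and> v \<in> V)
     \<and> (\<forall>u v. E u v \<longrightarrow> E v u) \<and> (\<forall>v. \<not> E v v)"

text \<open>A path in G given as the list of its (distinct) vertices; its order is its length.\<close>

definition is_path :: "'a set \<Rightarrow> ('a \<Rightarrow> 'a \<Rightarrow> bool) \<Rightarrow> 'a list \<Rightarrow> bool" where
  "is_path V E p \<longleftrightarrow> p \<noteq> [] \<and> distinct p \<and> set p \<subseteq> V
     \<and> (\<forall>i. Suc i < length p \<longrightarrow> E (p ! i) (p ! Suc i))"

definition tau :: "'a set \<Rightarrow> ('a \<Rightarrow> 'a \<Rightarrow> bool) \<Rightarrow> nat" where
  "tau V E = Max (insert 0 {length p | p. is_path V E p})"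

definition detour_colouring :: "'a set \<Rightarrow> ('a \<Rightarrow> 'a \<Rightarrow> bool) \<Rightarrow> nat \<Rightarrow> nat \<Rightarrow> ('a \<Rightarrow> nat) \<Rightarrow> bool" where
  "detour_colouring V E n k c \<longleftrightarrow> (\<forall>v\<in>V. c v < k)
     \<and> (\<forall>p. is_path V E p \<and> length p > n \<longrightarrow> \<not> (\<forall>v\<in>set p. c v = c (hd p)))"

definition detour_chromatic :: "'a set \<Rightarrow> ('a \<Rightarrow> 'a \<Rightarrow> bool) \<Rightarrow> nat \<Rightarrow> nat" where
  "detour_chromatic V E n = (LEAST k. \<exists>c. detour_colouring V E n k c)"

end

theory Submission
  imports Defs
begin

(* Let m = ceil((2n+2)/3).  Take A maximal among the vertex sets without paths of order > n and
   give it a fresh colour.  It suffices that every path P in the rest B extends to a path of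
   order |P| + m, since then tau drops by m and induction on the number of colours applies.
   By maximality every vertex of B has two disjoint arms into A (paths in A starting at a
   neighbour) of total order at least n.  If all paths had order < |P| + m, then gluing arms to
   the two ends of P bounds their orders; the two arms at the last vertex of P are then forced
   to run first into the longer arm L at the first vertex, and rerouting along L confines both
   meeting points to a window of L with room for only one vertex, although the two arms are
   disjoint. *)

definition epath :: "('a \<Rightarrow> 'a \<Rightarrow> bool) \<Rightarrow> 'a list \<Rightarrow> bool" where
  "epath E xs \<longleftrightarrow> distinct xs \<and> successively E xs"

lemma is_path_iff_epath: "is_path V E p \<longleftrightarrow> p \<noteq> [] \<and> epath E p \<and> set p \<subseteq> V"
  unfolding is_path_def epath_def successively_conv_nth by auto

lemma is_path_subset: "is_path V E p \<Longrightarrow> set p \<subseteq> W \<Longrightarrow> is_path W E p"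
  unfolding is_path_iff_epath by auto

lemma epath_append_iff:
  "epath E (xs @ ys) \<longleftrightarrow> epath E xs \<and> epath E ys \<and> set xs \<inter> set ys = {}
     \<and> (xs = [] \<or> ys = [] \<or> E (last xs) (hd ys))"
  unfolding epath_def by (auto simp: successively_append_iff)

lemma epath_Cons_iff:
  "epath E (x # xs) \<longleftrightarrow> x \<notin> set xs \<and> epath E xs \<and> (xs = [] \<or> E x (hd xs))"
  unfolding epath_def by (auto simp: successively_Cons)

lemma epath_rev:
  assumes "symp E"
  shows "epath E (rev xs) \<longleftrightarrow> epath E xs"
proof -
  have "(\<lambda>x y. E y x) = E"
    using assms by (auto dest: sympD)
  then show ?thesis
    unfolding epath_def by (metis distinct_rev successively_rev)
qed

definition arm :: "('a \<Rightarrow> 'a \<Rightarrow> bool) \<Rightarrow> 'a set \<Rightarrow> 'a \<Rightarrow> 'a list \<Rightarrow> bool" where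
  "arm E A v X \<longleftrightarrow> epath E X \<and> set X \<subseteq> A \<and> (X \<noteq> [] \<longrightarrow> E v (hd X))"

lemma arm_Nil [simp]: "arm E A v []"
  unfolding arm_def epath_def by simp

lemma arm_join:
  assumes "symp E" "epath E P" "P \<noteq> []" "set P \<inter> A = {}"
    and "arm E A (hd P) X" "arm E A (last P) Y" "set X \<inter> set Y = {}"
  shows "epath E (rev X @ P @ Y)"
proof -
  have "epath E (P @ Y)"
    using assms(2-4,6) unfolding epath_append_iff arm_def by auto
  moreover have "epath E (rev X)"
    using assms(1,5) epath_rev unfolding arm_def by blast
  moreover have "X \<noteq> [] \<Longrightarrow> E (hd X) (hd P)"
    using assms(1,5) unfolding arm_def by (blast dest: sympD)
  ultimately show ?thesis
    using assms(3-7) unfolding epath_append_iff[of E "rev X"] arm_def by (auto simp: last_rev)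
qed

lemma arm_reroute:
  assumes "arm E A v (D1 @ q # D2)" "epath E (q # Y)" "set Y \<subseteq> A"
    and "set D1 \<inter> set (q # Y) = {}"
  shows "arm E A v (D1 @ q # Y)"
  using assms unfolding arm_def epath_append_iff by (auto simp: hd_append)

lemma arms_of_long_path:
  assumes "symp E" and A: "\<And>p. is_path A E p \<Longrightarrow> length p \<le> n"
    and "v \<notin> A" "is_path (insert v A) E p" "n < length p"
  obtains L R where "arm E A v L" "arm E A v R" "set L \<inter> set R = {}"
    "n \<le> length L + length R" "length R \<le> length L"
proof -
  have "v \<in> set p"
  proof (rule ccontr)
    assume "v \<notin> set p"
    then have "is_path A E p"
      using assms(4) is_path_subset[of "insert v A" E p A] unfolding is_path_def by blast
    then show False
      using A assms(5) by fastforce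
  qed
  then obtain xs ys where p: "p = xs @ v # ys"
    by (meson split_list)
  have "epath E p" "set p \<subseteq> insert v A"
    using assms(4) unfolding is_path_iff_epath by auto
  then have "arm E A v (rev xs)" "arm E A v ys" "set (rev xs) \<inter> set ys = {}"
    using assms(1,3) unfolding p arm_def epath_append_iff epath_Cons_iff
    by (auto simp: epath_rev hd_rev dest: sympD)
  moreover have "n \<le> length (rev xs) + length ys"
    using assms(5) p by simp
  ultimately show ?thesis
    using that by (metis inf_commute add.commute nat_le_linear)
qed

lemma arm_hits_arm:
  assumes "symp E"
    and short: "\<forall>X Y. arm E A u X \<longrightarrow> arm E A w Y \<longrightarrow> set X \<inter> set Y = {}
      \<longrightarrow> length X + length Y < m"
    and X: "arm E A u X" and Z: "arm E A u Z" "set X \<inter> set Z = {}" "Z = Z1 @ q # Z2"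
    and D: "arm E A w (D1 @ q # D2)" "set D1 \<inter> (set X \<union> set Z) = {}"
  shows "length X + length Z1 + 1 < m" and "length X + length Z2 + 1 < m"
proof -
  have Z': "epath E (Z1 @ q # Z2)" "set Z \<subseteq> A"
    using Z unfolding arm_def by auto
  then have "epath E (Z1 @ [q])" "epath E (q # Z2)"
    using epath_append_iff[of E "Z1 @ [q]" Z2] epath_append_iff[of E Z1 "q # Z2"] by auto
  then have to_start: "epath E (q # rev Z1)" and to_end: "epath E (q # Z2)"
    using epath_rev[OF \<open>symp E\<close>, of "Z1 @ [q]"] by simp_all
  have "arm E A w (D1 @ q # rev Z1)"
    by (rule arm_reroute[OF D(1) to_start]) (use Z'(2) D(2) Z(3) in auto)
  moreover have "arm E A w (D1 @ q # Z2)"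
    by (rule arm_reroute[OF D(1) to_end]) (use Z'(2) D(2) Z(3) in auto)
  ultimately show "length X + length Z1 + 1 < m" "length X + length Z2 + 1 < m"
    using short X Z(2,3) D(2) by fastforce+
qed

lemma arm_meets_arms:
  assumes "symp E"
    and short: "\<forall>X Y. arm E A u X \<longrightarrow> arm E A w Y \<longrightarrow> set X \<inter> set Y = {}
      \<longrightarrow> length X + length Y < m"
    and L: "arm E A u L" and R: "arm E A u R" and LR: "set L \<inter> set R = {}"
    and D: "arm E A w D"
  shows "length L + length D < m
    \<or> (\<exists>R1 q R2. R = R1 @ q # R2 \<and> length L + length R1 + 1 < m \<and> length L + length R2 + 1 < m)
    \<or> (\<exists>L1 q L2. L = L1 @ q # L2 \<and> q \<in> set D
         \<and> length R + length L1 + 1 < m \<and> length R + length L2 + 1 < m)"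
proof (cases "\<exists>x\<in>set D. x \<in> set L \<union> set R")
  case False
  then show ?thesis
    using short L D by blast
next
  case True
  obtain D1 q D2 where D': "D = D1 @ q # D2" and q: "q \<in> set L \<union> set R"
    and first': "\<forall>y\<in>set D1. y \<notin> set L \<union> set R"
    using split_list_first_prop[OF True] by blast
  then have D1: "arm E A w (D1 @ q # D2)" and first: "set D1 \<inter> (set L \<union> set R) = {}"
    and "q \<in> set D"
    using D by auto
  show ?thesis
  proof (cases "q \<in> set R")
    case True
    then obtain R1 R2 where R12: "R = R1 @ q # R2"
      by (meson split_list)
    with arm_hits_arm[OF \<open>symp E\<close> short L R LR R12 D1 first] show ?thesis
      by blast
  next
    case False
    then obtain L1 L2 where L12: "L = L1 @ q # L2"
      using q by (meson UnE split_list)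
    have "set R \<inter> set L = {}" "set D1 \<inter> (set R \<union> set L) = {}"
      using LR first by blast+
    with arm_hits_arm[OF \<open>symp E\<close> short R L _ L12 D1] L12 \<open>q \<in> set D\<close> show ?thesis
      by blast
  qed
qed

lemma path_extends_through_maximal:
  assumes "symp E" and m: "2 * n + 2 \<le> 3 * m" "3 * m \<le> 2 * n + 4" "2 \<le> n"
    and A: "\<And>p. is_path A E p \<Longrightarrow> length p \<le> n"
    and B: "\<And>v. v \<in> B \<Longrightarrow> \<exists>p. is_path (insert v A) E p \<and> n < length p"
    and AB: "A \<inter> B = {}" and P: "is_path B E P"
  shows "\<exists>p. is_path (A \<union> B) E p \<and> length P + m \<le> length p"
proof (rule ccontr)
  assume no_long: "\<not> ?thesis"
  have P': "epath E P" "P \<noteq> []" "set P \<subseteq> B"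
    using P unfolding is_path_iff_epath by auto
  have short: "\<forall>X Y. arm E A (hd P) X \<longrightarrow> arm E A (last P) Y \<longrightarrow> set X \<inter> set Y = {}
      \<longrightarrow> length X + length Y < m"
  proof (intro allI impI)
    fix X Y
    assume arms: "arm E A (hd P) X" "arm E A (last P) Y" "set X \<inter> set Y = {}"
    have "is_path (A \<union> B) E (rev X @ P @ Y)"
      using arm_join[OF \<open>symp E\<close> P'(1,2) _ arms] P'(2,3) AB arms(1,2)
      unfolding is_path_iff_epath arm_def by auto
    then show "length X + length Y < m"
      using no_long by fastforce
  qed
  have arms: "\<exists>L R. arm E A v L \<and> arm E A v R \<and> set L \<inter> set R = {}
      \<and> n \<le> length L + length R \<and> length R \<le> length L" if v: "v \<in> set P" for v
  proof -
    obtain p where p: "is_path (insert v A) E p" "n < length p"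
      using B v P'(3) by blast
    have "v \<notin> A"
      using v P'(3) AB by blast
    show ?thesis
      using arms_of_long_path[of E A n v p] \<open>symp E\<close> A \<open>v \<notin> A\<close> p by metis
  qed
  obtain L R where L: "arm E A (hd P) L" and R: "arm E A (hd P) R" and LR: "set L \<inter> set R = {}"
    and nLR: "n \<le> length L + length R" and RL: "length R \<le> length L"
    using arms[OF hd_in_set[OF P'(2)]] by blast
  obtain D1 D2 where D1: "arm E A (last P) D1" and D2: "arm E A (last P) D2"
    and D12: "set D1 \<inter> set D2 = {}"
    and nD: "n \<le> length D1 + length D2" and D21: "length D2 \<le> length D1"
    using arms[OF last_in_set[OF P'(2)]] by blast
  have "m \<le> n"
    using m by presburger
  have "length L < m" "length D1 < m"
    using short L D1 arm_Nil by fastforce+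
  note meets = arm_meets_arms[OF \<open>symp E\<close> short L R LR]
  \<comment> \<open>Rerouting along R both ways would give 2|L| + |R| + 1 < 2m - 1, but |L| \<ge> n/2.\<close>
  have not_R: "\<not> (\<exists>R1 q R2. R = R1 @ q # R2 \<and> length L + length R1 + 1 < m
      \<and> length L + length R2 + 1 < m)"
    using nLR RL m by (auto simp: algebra_simps)
  have "\<not> length L + length D1 < m"
    using nLR RL nD D21 \<open>m \<le> n\<close> by linarith
  then obtain L1 q1 L2 where q1: "L = L1 @ q1 # L2" "q1 \<in> set D1"
    and hit1: "length R + length L1 + 1 < m" "length R + length L2 + 1 < m"
    using meets[OF D1] not_R by blast
  have "length L = length L1 + length L2 + 1"
    using q1(1) by simp
  then have "\<not> length L + length D2 < m"
    using hit1 nLR RL nD D21 \<open>length D1 < m\<close> m by linarith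
  then obtain L1' q2 L2' where q2: "L = L1' @ q2 # L2'" "q2 \<in> set D2"
    and hit2: "length R + length L1' + 1 < m" "length R + length L2' + 1 < m"
    using meets[OF D2] not_R by blast
  have "length L1 \<noteq> length L1'"
    using q1 q2 D12 by (metis disjoint_iff nth_append_length)
  moreover have "length L = length L1' + length L2' + 1"
    using q2(1) by simp
  \<comment> \<open>Both positions lie in the window (|L| + |R| - m, m - |R| - 1) of length at most 2.\<close>
  ultimately show False
    using \<open>length L = length L1 + length L2 + 1\<close> hit1 hit2 nLR \<open>length L < m\<close> m
    by linarith
qed

lemma finite_path_lengths:
  assumes "finite V"
  shows "finite {length p | p. is_path V E p}"
proof (rule finite_subset)
  show "{length p | p. is_path V E p} \<subseteq> {..card V}"
  proof
    fix x
    assume "x \<in> {length p | p. is_path V E p}"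
    then obtain p where "x = length p" "distinct p" "set p \<subseteq> V"
      unfolding is_path_def by blast
    then show "x \<in> {..card V}"
      using assms card_mono[of V "set p"] by (simp add: distinct_card)
  qed
qed simp

lemma length_le_tau: "finite V \<Longrightarrow> is_path V E p \<Longrightarrow> length p \<le> tau V E"
  unfolding tau_def using finite_path_lengths by (intro Max_ge) auto

lemma tau_le_iff: "finite V \<Longrightarrow> tau V E \<le> k \<longleftrightarrow> (\<forall>p. is_path V E p \<longrightarrow> length p \<le> k)"
  unfolding tau_def using finite_path_lengths by (subst Max_le_iff) auto

lemma detour_chromatic_le: "detour_colouring V E n k c \<Longrightarrow> detour_chromatic V E n \<le> k"
  unfolding detour_chromatic_def by (rule Least_le) blast

lemma detour_colouring_fresh_colour:
  assumes "A \<inter> B = {}" and A: "\<And>p. is_path A E p \<Longrightarrow> length p \<le> n"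
    and c: "detour_colouring B E n k c"
  shows "detour_colouring (A \<union> B) E n (Suc k) (\<lambda>v. if v \<in> A then k else c v)"
    (is "detour_colouring _ _ _ _ ?c")
  unfolding detour_colouring_def
proof (intro conjI allI impI notI)
  have c_lt: "\<forall>v\<in>B. c v < k"
    using c unfolding detour_colouring_def by blast
  then show "\<forall>v\<in>A \<union> B. ?c v < Suc k"
    by auto
  fix p
  assume p: "is_path (A \<union> B) E p \<and> n < length p" and mono: "\<forall>v\<in>set p. ?c v = ?c (hd p)"
  have p_sub: "set p \<subseteq> A \<union> B" and "hd p \<in> set p"
    using p unfolding is_path_def by auto
  show False
  proof (cases "hd p \<in> A")
    case True
    have "set p \<subseteq> A"
    proof
      fix v
      assume v: "v \<in> set p"
      show "v \<in> A"
      proof (rule ccontr)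
        assume "v \<notin> A"
        then have "c v = k" "v \<in> B"
          using mono v True p_sub by auto
        then show False
          using c_lt by fastforce
      qed
    qed
    then show False
      using A[of p] p is_path_subset[of "A \<union> B" E p A] by linarith
  next
    case False
    then have hd_B: "hd p \<in> B"
      using p_sub \<open>hd p \<in> set p\<close> by blast
    have "v \<notin> A \<and> c v = c (hd p)" if v: "v \<in> set p" for v
    proof (cases "v \<in> A")
      case True
      then have "c (hd p) = k"
        using mono v False by fastforce
      then show ?thesis
        using c_lt hd_B by fastforce
    qed (use mono v False in auto)
    then have "set p \<subseteq> B" "\<forall>v\<in>set p. c v = c (hd p)"
      using p_sub by auto
    then show False
      using c p is_path_subset[of "A \<union> B" E p B] unfolding detour_colouring_def by blast
  qed
qed

lemma detour_colouring_if_tau_le: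
  assumes "symp E" and m: "2 * n + 2 \<le> 3 * m" "3 * m \<le> 2 * n + 4" "2 \<le> n"
  shows "finite U \<Longrightarrow> tau U E \<le> n + j * m \<Longrightarrow> \<exists>c. detour_colouring U E n (Suc j) c"
proof (induction j arbitrary: U)
  case 0
  then have "detour_colouring U E n 1 (\<lambda>_. 0)"
    unfolding detour_colouring_def by (auto simp: tau_le_iff not_less)
  then show ?case
    by auto
next
  case (Suc j)
  define free where "free = {A. A \<subseteq> U \<and> (\<forall>p. is_path A E p \<longrightarrow> length p \<le> n)}"
  have "finite free" "{} \<in> free"
    using Suc.prems(1) unfolding free_def is_path_def by auto
  then obtain A where "A \<in> free" and A_max: "\<And>A'. A' \<in> free \<Longrightarrow> A \<subseteq> A' \<Longrightarrow> A = A'"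
    using finite_has_maximal[of free] by blast
  then have "A \<subseteq> U" and A: "\<And>p. is_path A E p \<Longrightarrow> length p \<le> n"
    unfolding free_def by auto
  define B where "B = U - A"
  have B: "\<exists>p. is_path (insert v A) E p \<and> n < length p" if "v \<in> B" for v
  proof -
    have "insert v A \<notin> free"
      using A_max[of "insert v A"] that unfolding B_def by blast
    then show ?thesis
      using that \<open>A \<subseteq> U\<close> unfolding free_def B_def by (auto simp: not_le)
  qed
  have AB: "A \<inter> B = {}" "A \<union> B = U"
    using \<open>A \<subseteq> U\<close> unfolding B_def by auto
  have "finite B"
    using Suc.prems(1) unfolding B_def by blast
  have "tau B E \<le> n + j * m"
    unfolding tau_le_iff[OF \<open>finite B\<close>]
  proof (intro allI impI)
    fix P
    assume "is_path B E P"
    then obtain p where "is_path U E p" "length P + m \<le> length p"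
      using path_extends_through_maximal[OF assms A B AB(1)] AB(2) by blast
    then show "length P \<le> n + j * m"
      using length_le_tau[OF Suc.prems(1)] Suc.prems(2) by fastforce
  qed
  then obtain c where "detour_colouring B E n (Suc j) c"
    using Suc.IH \<open>finite B\<close> by blast
  then show ?case
    using detour_colouring_fresh_colour[OF AB(1) A] AB(2) by blast
qed

lemma nat_ceiling_bounds:
  fixes x :: real
  assumes "0 \<le> x"
  shows "x \<le> real (nat \<lceil>x\<rceil>)" and "real (nat \<lceil>x\<rceil>) < x + 1"
  using assms by linarith+

theorem theorem1p28:
  fixes V :: "'a set" and E :: "'a \<Rightarrow> 'a \<Rightarrow> bool" and n :: nat
  assumes "simple_graph V E" and "n \<ge> 2"
  shows "real (detour_chromatic V E n) \<le>
    (if n \<le> tau V E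
     then real_of_int (\<lceil>(real (tau V E) - real n) / real_of_int \<lceil>(2 * real n + 2) / 3\<rceil>\<rceil>) + 1
     else 1)"
proof -
  have "symp E" "finite V"
    using assms(1) unfolding simple_graph_def symp_def by auto
  define m where "m = nat \<lceil>(2 * real n + 2) / 3\<rceil>"
  have m_real: "real_of_int \<lceil>(2 * real n + 2) / 3\<rceil> = real m"
    unfolding m_def by simp
  have "real (2 * n + 2) \<le> real (3 * m)" "real (3 * m) < real (2 * n + 5)"
    using nat_ceiling_bounds[of "(2 * real n + 2) / 3"] unfolding m_def[symmetric]
    by (simp_all add: field_simps)
  then have m: "2 * n + 2 \<le> 3 * m" "3 * m \<le> 2 * n + 4"
    unfolding of_nat_le_iff of_nat_less_iff by linarith+
  define q where "q = \<lceil>(real (tau V E) - real n) / real m\<rceil>"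
  define j where "j = (if n \<le> tau V E then nat q else 0)"
  have j_real: "real j = (if n \<le> tau V E then real_of_int q else 0)"
    unfolding j_def q_def by simp
  have "tau V E \<le> n + j * m"
  proof (cases "n \<le> tau V E")
    case True
    then have "(real (tau V E) - real n) / real m \<le> real j"
      using nat_ceiling_bounds(1)[of "(real (tau V E) - real n) / real m"]
      unfolding j_def q_def by simp
    then have "real (tau V E) \<le> real (n + j * m)"
      using m by (simp add: divide_le_eq)
    then show ?thesis
      by (simp only: of_nat_le_iff)
  qed (simp add: j_def)
  then obtain c where "detour_colouring V E n (Suc j) c"
    using detour_colouring_if_tau_le[OF \<open>symp E\<close> m assms(2) \<open>finite V\<close>] by blast
  then have "detour_chromatic V E n \<le> Suc j"
    by (rule detour_chromatic_le)
  then have "real (detour_chromatic V E n) \<le> real j + 1"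
    by simp
  then show ?thesis
    unfolding m_real q_def[symmetric] j_real by (simp split: if_splits)
qed

end
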